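(* For every $t \in \mathbb{N}_0$ and every integer $b \ge 2$, the cyclotomic polynomial $\Phi_b(x)$ does not divide \[ Q_t(x) = x^{4t+7} - x^{4t+5} - x^{4t+4} + 2x^{2t+4} + x^{2t+3} + x^{2t+2} + x^{2t} - 2x^{t+3} - x^2 - 1. \]
   Context: $\Phi_b(x) = \prod_\zeta (x-\zeta)$, where $\zeta$ ranges over the primitive $b$-th roots of unity, is the $b$-th cyclotomic polynomial. *)

theory Defs
  imports "HOL-Complex_Analysis.Complex_Analysis" "HOL-Computational_Algebra.Polynomial"
begin

definition primitive_roots_of_unity :: "nat \<Rightarrow> complex set" where
  "primitive_roots_of_unity b = {z. z ^ b = 1 \<and> (\<forall>k. 0 < k \<and> k < b \<longrightarrow> z ^ k \<noteq> 1)}"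

definition cyclotomic_poly :: "nat \<Rightarrow> complex poly" where
  "cyclotomic_poly b = (\<Prod>\<zeta>\<in>primitive_roots_of_unity b. [:-\<zeta>, 1:])"

definition Q_poly :: "nat \<Rightarrow> complex poly" where
  "Q_poly t = monom 1 (4*t+7) - monom 1 (4*t+5) - monom 1 (4*t+4) + monom 2 (2*t+4)
     + monom 1 (2*t+3) + monom 1 (2*t+2) + monom 1 (2*t) - monom 2 (t+3) - monom 1 2 - 1"

end

theory Submission
  imports Defs
begin

(* Write P(x, y) for the bivariate polynomial with Q_t(x) = P(x, x^t). A root z of Q_t on
   the unit circle gives a common root (z, y) = (z, z^t) of P and of its reciprocal
   x^7 y^4 P(1/x, 1/y), because conjugation maps z to 1/z and y to 1/y. Eliminating y
   (an explicit certificate for the resultant with respect to y) shows that z is a root of a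
   fixed integer polynomial S of degree 34, unless z = 1. If Phi_b divides Q_t, every
   primitive b-th root of unity is therefore a root of S. But with z, one of z^2, -z^2, -z
   is again primitive (according to b mod 4), while S(x) has no common root with S(x^2),
   S(-x^2) or S(-x): this is witnessed by explicit Bezout identities with nonzero constant. *)

text \<open>Integer polynomials as coefficient lists, constant term first; trailing zeros are allowed,
  so the zero polynomial is any list satisfying \<open>list_all ((=) 0)\<close>.\<close>

type_synonym ipoly = "int list"

fun ipoly_add :: "ipoly \<Rightarrow> ipoly \<Rightarrow> ipoly" where
  "ipoly_add [] q = q"
| "ipoly_add p [] = p"
| "ipoly_add (a # p) (b # q) = (a + b) # ipoly_add p q"

fun ipoly_mult :: "ipoly \<Rightarrow> ipoly \<Rightarrow> ipoly" where
  "ipoly_mult [] q = []"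
| "ipoly_mult (a # p) q = ipoly_add (map ((*) a) q) (0 # ipoly_mult p q)"

fun ipoly_eval :: "ipoly \<Rightarrow> complex \<Rightarrow> complex" where
  "ipoly_eval [] z = 0"
| "ipoly_eval (c # cs) z = of_int c + z * ipoly_eval cs z"

fun ipoly_comp_sq :: "ipoly \<Rightarrow> ipoly" where
  "ipoly_comp_sq [] = []"
| "ipoly_comp_sq (c # cs) = c # 0 # ipoly_comp_sq cs"

fun ipoly_comp_neg :: "ipoly \<Rightarrow> ipoly" where
  "ipoly_comp_neg [] = []"
| "ipoly_comp_neg (c # cs) = c # map uminus (ipoly_comp_neg cs)"

text \<open>A bivariate polynomial is the list of its coefficients in \<open>y\<close>, each a polynomial in \<open>x\<close>.\<close>

type_synonym ipoly2 = "int list list"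

fun ipoly2_add :: "ipoly2 \<Rightarrow> ipoly2 \<Rightarrow> ipoly2" where
  "ipoly2_add [] q = q"
| "ipoly2_add p [] = p"
| "ipoly2_add (a # p) (b # q) = ipoly_add a b # ipoly2_add p q"

fun ipoly2_mult :: "ipoly2 \<Rightarrow> ipoly2 \<Rightarrow> ipoly2" where
  "ipoly2_mult [] q = []"
| "ipoly2_mult (a # p) q = ipoly2_add (map (ipoly_mult a) q) ([] # ipoly2_mult p q)"

fun ipoly2_eval :: "ipoly2 \<Rightarrow> complex \<Rightarrow> complex \<Rightarrow> complex" where
  "ipoly2_eval [] x y = 0"
| "ipoly2_eval (c # cs) x y = ipoly_eval c x + y * ipoly2_eval cs x y"

lemma ipoly_eval_add: "ipoly_eval (ipoly_add p q) z = ipoly_eval p z + ipoly_eval q z"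
  by (induction p q rule: ipoly_add.induct) (auto simp: algebra_simps)

lemma ipoly_eval_scale: "ipoly_eval (map ((*) a) q) z = of_int a * ipoly_eval q z"
  by (induction q) (auto simp: algebra_simps)

lemma ipoly_eval_mult: "ipoly_eval (ipoly_mult p q) z = ipoly_eval p z * ipoly_eval q z"
  by (induction p) (auto simp: ipoly_eval_add ipoly_eval_scale algebra_simps)

lemma ipoly_eval_uminus: "ipoly_eval (map uminus q) z = - ipoly_eval q z"
  by (induction q) (auto simp: algebra_simps)

lemma ipoly_eval_comp_sq: "ipoly_eval (ipoly_comp_sq p) z = ipoly_eval p (z ^ 2)"
  by (induction p) (auto simp: algebra_simps power2_eq_square)

lemma ipoly_eval_comp_neg: "ipoly_eval (ipoly_comp_neg p) z = ipoly_eval p (- z)"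
  by (induction p) (auto simp: ipoly_eval_uminus algebra_simps)

lemma ipoly_eval_zero: "list_all ((=) 0) p \<Longrightarrow> ipoly_eval p z = 0"
  by (induction p) auto

lemma ipoly_eval_cnj: "cnj (ipoly_eval p z) = ipoly_eval p (cnj z)"
  by (induction p) auto

lemma ipoly2_eval_add: "ipoly2_eval (ipoly2_add p q) x y = ipoly2_eval p x y + ipoly2_eval q x y"
  by (induction p q rule: ipoly2_add.induct) (auto simp: ipoly_eval_add algebra_simps)

lemma ipoly2_eval_scale: "ipoly2_eval (map (ipoly_mult a) q) x y = ipoly_eval a x * ipoly2_eval q x y"
  by (induction q) (auto simp: ipoly_eval_mult algebra_simps)

lemma ipoly2_eval_mult: "ipoly2_eval (ipoly2_mult p q) x y = ipoly2_eval p x y * ipoly2_eval q x y"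
  by (induction p) (auto simp: ipoly2_eval_add ipoly2_eval_scale algebra_simps)

lemma ipoly2_eval_zero: "list_all (list_all ((=) 0)) p \<Longrightarrow> ipoly2_eval p x y = 0"
  by (induction p) (auto simp: ipoly_eval_zero)

lemma ipoly2_eval_cnj: "cnj (ipoly2_eval p x y) = ipoly2_eval p (cnj x) (cnj y)"
  by (induction p) (auto simp: ipoly_eval_cnj)

lemma finite_primitive_roots_of_unity: "b > 0 \<Longrightarrow> finite (primitive_roots_of_unity b)"
  by (rule finite_subset[OF _ finite_roots_unity[of b]]) (auto simp: primitive_roots_of_unity_def)

lemma primitive_root_of_unity_pow_eq_1_iff:
  assumes "z \<in> primitive_roots_of_unity b" "b > 0"
  shows "z ^ n = 1 \<longleftrightarrow> b dvd n"
proof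
  have zb: "z ^ b = 1"
    using assms(1) by (simp add: primitive_roots_of_unity_def)
  assume "z ^ n = 1"
  moreover have "z ^ n = z ^ (n mod b) * (z ^ b) ^ (n div b)"
    by (metis mod_div_mult_eq power_add power_mult mult.commute)
  ultimately have "z ^ (n mod b) = 1"
    using zb by simp
  moreover have "n mod b < b"
    using assms(2) by simp
  ultimately have "n mod b = 0"
    using assms(1) unfolding primitive_roots_of_unity_def by auto
  then show "b dvd n" by auto
next
  assume "b dvd n"
  with assms(1) show "z ^ n = 1"
    by (auto simp: primitive_roots_of_unity_def power_mult)
qed

lemma primitive_roots_of_unity_iff:
  assumes "b > 0"
  shows "z \<in> primitive_roots_of_unity b \<longleftrightarrow> (\<forall>n. z ^ n = 1 \<longleftrightarrow> b dvd n)"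
proof
  show "\<forall>n. z ^ n = 1 \<longleftrightarrow> b dvd n" if "z \<in> primitive_roots_of_unity b"
    using primitive_root_of_unity_pow_eq_1_iff[OF that assms] by blast
next
  assume "\<forall>n. z ^ n = 1 \<longleftrightarrow> b dvd n"
  then show "z \<in> primitive_roots_of_unity b"
    unfolding primitive_roots_of_unity_def by (auto dest: dvd_imp_le)
qed

lemma primitive_root_of_unity_pow:
  assumes "z \<in> primitive_roots_of_unity b" "b > 0" "coprime j b"
  shows "z ^ j \<in> primitive_roots_of_unity b"
proof -
  have "(z ^ j) ^ n = 1 \<longleftrightarrow> b dvd n" for n
  proof -
    have "(z ^ j) ^ n = 1 \<longleftrightarrow> b dvd j * n"
      by (simp add: primitive_root_of_unity_pow_eq_1_iff[OF assms(1,2)] flip: power_mult)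
    also have "\<dots> \<longleftrightarrow> b dvd n"
      using assms(3) by (simp add: coprime_commute coprime_dvd_mult_right_iff)
    finally show ?thesis .
  qed
  then show ?thesis
    using assms(2) by (simp add: primitive_roots_of_unity_iff)
qed

lemma primitive_root_of_unity_exists:
  assumes "b > 0"
  shows "\<exists>z. z \<in> primitive_roots_of_unity b"
proof
  have "exp (2 * of_real pi * \<i> / of_nat b) ^ n = exp (2 * of_real pi * \<i> * of_nat n / of_nat b)" for n
    by (simp add: exp_of_nat_mult[symmetric] mult_ac)
  then show "exp (2 * of_real pi * \<i> / of_nat b) \<in> primitive_roots_of_unity b"
    using assms by (simp add: primitive_roots_of_unity_iff complex_root_unity_eq_1)
qed

lemma norm_primitive_root_of_unity:
  assumes "z \<in> primitive_roots_of_unity b" "b > 0"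
  shows "norm z = 1"
proof -
  have "norm z ^ b = 1"
    using assms(1) by (simp add: primitive_roots_of_unity_def flip: norm_power)
  then show ?thesis
    using assms(2) by (metis norm_ge_zero power_eq_imp_eq_base power_one zero_le_one)
qed

lemma poly_cyclotomic_poly_primitive_root:
  assumes "z \<in> primitive_roots_of_unity b" "b > 0"
  shows "poly (cyclotomic_poly b) z = 0"
  using assms finite_primitive_roots_of_unity[OF assms(2)]
  unfolding cyclotomic_poly_def poly_prod by (auto intro!: bexI[of _ z])

lemma primitive_root_of_unity_shift:
  assumes z: "z \<in> primitive_roots_of_unity b" and b: "b > 0"
  shows "z ^ 2 \<in> primitive_roots_of_unity b \<or> - (z ^ 2) \<in> primitive_roots_of_unity b
    \<or> - z \<in> primitive_roots_of_unity b"
proof (cases "odd b")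
  case True
  then have "coprime 2 b" by simp
  with z b show ?thesis
    using primitive_root_of_unity_pow by simp
next
  case False
  then obtain m where m: "b = 2 * m" by (auto elim: evenE)
  with b have "0 < m" "m < b" by simp_all
  with z have "z ^ m \<noteq> 1"
    unfolding primitive_roots_of_unity_def by blast
  moreover have "(z ^ m) ^ 2 = z ^ b"
    unfolding m by (metis power_mult mult.commute)
  with z have "(z ^ m) ^ 2 = 1"
    by (simp add: primitive_roots_of_unity_def)
  ultimately have zm: "z ^ m = -1"
    by (simp add: power2_eq_1_iff)
  show ?thesis
  proof (cases "odd m")
    case True
    then have "coprime (2 + m) m"
      using gcd_add1[of 2 m] by (simp only: coprime_iff_gcd_eq_1) simp
    with True have "coprime (m + 2) b"
      unfolding m by (simp add: add.commute)
    then have "z ^ (m + 2) \<in> primitive_roots_of_unity b"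
      using primitive_root_of_unity_pow[OF z b] by blast
    then show ?thesis
      by (simp add: power_add zm power2_eq_square)
  next
    case False
    then have "coprime (m + 1) b"
      unfolding m by simp
    then have "z ^ (m + 1) \<in> primitive_roots_of_unity b"
      using primitive_root_of_unity_pow[OF z b] by blast
    then show ?thesis
      by (simp add: power_add zm)
  qed
qed

definition P_coeffs :: ipoly2 where
  "P_coeffs = [[-1, 0, -1], [0, 0, 0, -2], [1, 0, 1, 1, 2], [], [0, 0, 0, 0, -1, -1, 0, 1]]"

definition P_reciprocal_coeffs :: ipoly2 where
  "P_reciprocal_coeffs = [[1, 0, -1, -1], [], [0, 0, 0, 2, 1, 1, 0, 1], [0, 0, 0, 0, -2], [0, 0, 0, 0, 0, -1, 0, -1]]"

lemma poly_Q_poly: "poly (Q_poly t) z = ipoly2_eval P_coeffs z (z ^ t)"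
proof -
  define y where "y = z ^ t"
  have y4: "z ^ (4 * t) = y ^ 4" and y2: "z ^ (2 * t) = y ^ 2"
    by (simp_all add: y_def flip: power_mult add: mult.commute)
  have "poly (Q_poly t) z = ipoly2_eval P_coeffs z y"
    unfolding Q_poly_def poly_diff poly_add poly_monom power_add y4 y2 y_def[symmetric]
    by (simp add: P_coeffs_def; algebra)
  then show ?thesis
    by (simp add: y_def)
qed

lemma ipoly2_eval_P_reciprocal:
  assumes "x \<noteq> 0" "y \<noteq> 0"
  shows "ipoly2_eval P_reciprocal_coeffs x y
    = x ^ 7 * y ^ 4 * ipoly2_eval P_coeffs (inverse x) (inverse y)"
  using assms by (simp add: P_coeffs_def P_reciprocal_coeffs_def field_simps; algebra)

text \<open>\<open>S_coeffs\<close>, \<open>elim_U\<close>, \<open>elim_V\<close> and the Bezout cofactors further below come from an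
  external resultant computation; here the identities are merely verified, by \<open>code_simp\<close>.\<close>

definition S_coeffs :: ipoly where
  "S_coeffs = [1, 2, -1, -10, -25, -58, -114, -182, -255, -302, -230, -38, 136, 160, 117, 222, 483, 640, 483, 222, 117, 160, 136, -38, -230, -302, -255, -182, -114, -58, -25, -10, -1, 2, 1]"

definition elim_U :: ipoly2 where
  "elim_U = [[0, 0, 0, -2, 0, 9, 14, 10, 24, 21, -39, -78, -9, 54, 42, -91, -87, 3, 122, 55, -27, -35, 0, 24, -8, -7, -4, 8, 0, -1, -2, -2, -1, 0, -1], [0, 0, 0, 0, 2, 0, -8, -20, -12, 4, 22, -10, -28, 0, 80, 60, 52, -36, -10, -4, 34, -26, -58, -68, -76, -18, -4, 18, 22, 32, 14, 12, 12, 4, 0, 2], [0, 0, 0, 0, 0, 1, 0, -3, -3, -8, -40, -66, -21, 31, 36, -1, 24, 47, 84, 21, -40, -19, 35, 51, 12, -7, -37, -27, -17, -17, -3, 1, -3, 0, 1], [0, 0, 0, 0, 0, 0, 0, 0, 0, 2, 0, -10, -24, -14, -6, 10, 4, 12, -10, 32, 2, 14, -8, 6, 20, 28, 28, -10, -2, -20, -14, -8, -10, -4, 0, -2]]"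

definition elim_V :: ipoly2 where
  "elim_V = [[1, 0, -3, -7, -9, -21, -25, -23, -13, 9, 68, 59, 11, -47, 36, 75, 100, -81, -104, -27, 66, 37, -55, -58, -44, 24, 5, 7, 20, 7, 2, 6], [0, 0, 0, 0, 2, 0, -8, -18, -10, -14, 2, 18, 24, -68, -62, -2, 110, 44, -32, -60, 42, 122, 68, 16, -14, -2, -30, -32, -28, -20, -8, -4, -4], [0, 0, 0, 0, -1, -1, 4, 12, 11, 9, 16, 18, -10, -43, -46, -13, -5, -19, -16, 37, 47, 8, -37, -18, 31, 37, 1, -24, -8, 1, 1, 0, -1, 0, 1], [0, 0, 0, 0, 0, 0, 0, 0, -2, -2, 12, 38, 26, -28, -54, 0, 32, 8, -50, -30, 24, 56, -20, -68, -36, 18, 38, 22, 12, 2, 8, -4, -8, 0, 0, -2]]"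

lemma elimination_identity:
  "ipoly2_eval elim_U x y * ipoly2_eval P_coeffs x y
    + ipoly2_eval elim_V x y * ipoly2_eval P_reciprocal_coeffs x y
    = (1 - x) ^ 2 * ipoly_eval S_coeffs x"
proof -
  have "list_all (list_all ((=) 0))
    (ipoly2_add (ipoly2_add (ipoly2_mult elim_U P_coeffs) (ipoly2_mult elim_V P_reciprocal_coeffs))
      [map uminus (ipoly_mult [1, -2, 1] S_coeffs)])"
    by code_simp
  from ipoly2_eval_zero[OF this, of x y] show ?thesis
    by (simp add: ipoly2_eval_add ipoly2_eval_mult ipoly_eval_uminus ipoly_eval_mult
        power2_eq_square algebra_simps del: ipoly_mult.simps)
qed

lemma S_root_if_Q_poly_root:
  assumes "norm z = 1" "z \<noteq> 1" "poly (Q_poly t) z = 0"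
  shows "ipoly_eval S_coeffs z = 0"
proof -
  define y where "y = z ^ t"
  have "norm y = 1"
    using assms(1) by (simp add: y_def norm_power)
  with assms(1) have nonzero: "z \<noteq> 0" "y \<noteq> 0" and
    inverse_cnj: "inverse z = cnj z" "inverse y = cnj y"
    by (auto simp: inverse_eq_divide divide_conv_cnj)
  have P: "ipoly2_eval P_coeffs z y = 0"
    using assms(3) by (simp add: poly_Q_poly y_def)
  have "ipoly2_eval P_reciprocal_coeffs z y = z ^ 7 * y ^ 4 * cnj (ipoly2_eval P_coeffs z y)"
    by (simp add: ipoly2_eval_P_reciprocal nonzero inverse_cnj ipoly2_eval_cnj)
  with P have "ipoly2_eval P_reciprocal_coeffs z y = 0"
    by simp
  with P have "(1 - z) ^ 2 * ipoly_eval S_coeffs z = 0"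
    by (simp flip: elimination_identity[of z y])
  with assms(2) show ?thesis
    by simp
qed

definition bezout_sq_U :: ipoly where
  "bezout_sq_U = [12056554412140079730015694751251010690604869954889041736499175383089895207, -21465744617118087057027270440645933411315850825896202710570158684338901892, 49306083549325301088680353484903912241282907503838333357774633815294304079, -75157102173868763063711288804315051385909738231136671564805429420413694722, 102277458217779634484695153379713980414574658690685278538195210012845141852, -178805221810460183162478423897556673713329194348652040274833431600042822398, 199337797865175682871176373913760296573257842532672156513164873919459434435, -351937610885596404834481886391100210544317968901469171212656474939725382988, 330631349491423954931937071425332801494089521564518268191738894321558493828, -596619009045547509867165387026751428601943402175218097164945456682177698308, 464308001487366507828132069876294921660524752846231825791997746933504911498, -961766054176421142303584096232871506502652098793027628043252084691702925038, 710131986716479879514333923616304766576221161532473768995078771443960959949, -1573394687049599523529944569883115811782076581159194524613620685183386006672, 1158080090807157765600160799762120037824598997555724709288120007902554456866, -2240850524814145802181340981110774518730434803444656506096960183416159551002, 1338246588512927476435498795789518519382005029267211632979724336061726050546, -2253470995957522225483897727002234818137210197690819954844213483751261221274, 717624128072913366386728959550827723461718297419739097555948504667906451309, -1068501567643143223987687651539509808463091870323551711175270466606080665878, -376795126128299092209257534204559554752663856968797312509995674563375476843, 564764831726480762660582319245858430928289612267633992268754489324302343430, -905061539542950222528957686700516021399630958231926650794456117423006054825, 1268575219296643995404919441334665233163226394127440846641969210940123836330, -512547193112883199488244757160719232921808654213244134481633464060008578228, 904017251139903312079421933628177871940716323608191226737061158196473953856, -278216145667458568424558078635085087071653327319088318047160376716362295179,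 1010452909442318547806109942792028016177955421299849151073449410256721452128, -1187132559217235149998190902566269061808132201795279857633406319839995271638, 2665430990860268436667046932724898862876922553875447205413714827269086566610, -2537431912289067995218093760703654249468950796638989997690417606523883054817, 4503028121880152708247518988417060158439059250216080401567795519552427103866, -2636133220045646535792745199924985829230613021536898661319759319971549907747, 4516067478080397464512726816305525300620612890348811893444516142104579006356, -1462726121414168469355561346282189569176064628779521799163623104112747916265, 2724504665721946904170479440874026561325763145911484349163516490790009237554, -467569528306482529881974698788817705494518893769571015133845455504203673589, 1230258846199074885831469546240597909074203685435351652120811697061380960130, -472872282541727519979289782519766127088629299536699226586473992281211102512, 1074549655116396636601012129531621170482822545752125304670869283602839480428, -767054520506818424651377070382837219062866527610558384614733570810033200711, 1267660834369753244125546416664893972949278688608927941919817642674930872600, -408972665459845287133631772412760786725250795968151637652148574201651845740, 529055482016105823860125653274331648520424763561407403032760952860739774096, 478669336106793301306805799975434502268984566183419815920455965931827287419, -952061952252345183601941625331983996315146033725374156217655976853039695678, 1134022075386285906203904065224396767220519193598491081196351704600889185977, -2039826136456358284485816007603379162117939901730464996608030429673371211724, 1190075568782420367560146062156217480347273278507285654427555161068039699850, -2204438236279888694387802682548809526468756719781268192367586035779185996208, 942790082233992527603157059725395039036947930510669020627477834157608245210, -1758073388315402683172497879348454511776140377553584184905442959122079943904, 648630508756741070226389965268001902321695460434383023847513337507103089050, -1196739591351625902453040038521863221085868960968569208099785036878040350130, 372773925782882906513462152780698961187914875955337257491819121665063986707, -701107918812669891929052855442623646542765811831238862444378611083796768238,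 178067895250575730048765442391991278613606028490598419130645679827177752608, -345571846089883015822393318371145249104793491979713972147276432191866308484, 79404980323296706415039765485408701621080935124921797741125087696817740491, -145989546881170021252708751636843771098628797132621170118108847695872258948, 24181333140001552704287042462581964908800440326459189794925984192764254782, -46493330463594016671826829165152069436832654794358596593201598788012542388, -4191097224860820290665903927554608780836513621432400334864861837626982709, 2874329482368245478744157245438957645355793524987837949972273533047607472, -7129828810211636053778832705783527793360591716614582905009310846380270087, 11929428692677241735881867407755521047150827382540447035962134747020275698, -1753743696392464618507998529148255167938183595692959442440711502211644925, 4471545838332337818717034725198963207143562065469982516694719159444458292]"

definition bezout_sq_V :: ipoly where
  "bezout_sq_V = [24068721122776251468362537481723817366672131500034009898521367138220954509, -2647364207162072403004119061856087969893889083881880762428192081840888522, -42455482148501550181335192815808669461390598897224905997177875339968514106, 80939462993825015935488497030083576337864550114217981028534141100066913786, 293078929231383667242560365201977124039944295183174236148845198195292895647, 390264288975645505657427784617239828037662411198369655344585651135648543374, 483139056775582884449748544023140660439028462832046542309190940103938990520, 799191926665675454279619882150803950540565030354830498677171169124029432576, 1274867383068366804528916944828836092481907076814625931986117797539105169746, 1146961782859424879108424672650836471698863558470675578214351146523244456636, 196161279906330923252800514672475962334313877108752381096869689324846225322, -739046664828532446732880388560483471892355826176368813955401237511669447892, -662479699236214593344712672877446495265809026337570786833835912230053904212, -109298716256177973987271208737614876365168307098197274159461027670150840864, -570180108927753538383220103987288716098500474764060196226222334088047449495, -1807163005693966206026331766808246374671675684107334910090000341708699777278, -2592623522667405588810333362744312191816992816307697619632044660686153460952,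 -1885474210638142307629007187901701406732228037922250631384444075782104396050, -766359877912761808794657999937001856983146475027010797954086910578445698230, -386127116785046047093054893693636497718188035235696517456892607029411829410, -677441374720705219984141101252287377370697775174187001251162642642289468717, -644196652397637239694930289852356557038988990271261574850081426247220197416, 64656132689280226782975258273232508473687275695686281263118720407171111936, 798896970458324703178597211856851020178616065081244267257261487283389041262, 1130935667614236336710018806431886345977571263308126643039612107037743959116, 996244679685222343243088523966331939807777630362280386550692229573226247624, 714229431832928326438436675688604311630685366122058339993342417491077449818, 446785557508254815993046570888183392681163437434276691387021354918080992400, 237700850465211901265120233808805781547287167887865474726881598115310040802, 103109027556574327914253756034900426460267418894620922074267736239810980102, 40611382072332488188529588455613205095254255081034565739488975077927200004, 4992696215104700957285233826137878910156226005255419399003445735736389028, -7189347980272211018926070921249671246348940535247005590948726816677271659, -4471545838332337818717034725198963207143562065469982516694719159444458292]"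

definition bezout_sq_N :: int where
  "bezout_sq_N = 36125275534916331198378232232974828057277001454923051635020542521310849716"

definition bezout_neg_sq_U :: ipoly where
  "bezout_neg_sq_U = [475257678060836287322039261746793675438846156629729292137609113923479623, -407456846998110207874014223581475297998719643001143342637791504047849898, -902586480738002855672389573563974363007989261404693049588821374222977970, 1195241607407677108932347036276253566169694572042479184055807741032464086, -920984078253542558907226350245998636853741872692836331398218393578084831, 81724183490851739859059769845729280021279284128195343967278784406219808, 3385767380896608975080897821108758758589757198929182122206505964169182384, -1929210278513263363758842994210533427899312042992108987501874073731958236, -7388749874852241368067530520016024594481292491843205693040076604282290237, 4495932147258722782960192646461532437647605589282613430690978432911182022, 18744960995379760291493508272449496066928811100162097445195616544464124921, -13449129585357934260093945326063519645014371015154059957632429270204535990, -35447762443220245962817551173654113177461745447976108149537847946335489697, 28453706632797139772330845863050958645290032702318905830751025005431723608, 52116125120058644388365453750535378429850375040393997784114087460593304298, -43346629459286504357296135124131090312390133328280595210111444746353475434, -74734255380387996756044797644910064668831410329358155538195606865647667834, 69124783004175916714990573398629643450424294537569881482172315930853457632, 74284235154747512518808136469682396432044312655773491510683811218388857388, -75605192774394872782106092344970715879071034942952210157786344383620928590, -34807002345380454157510447519488564259366470375869236794824170617137148904, 41539836179253114179440958041106085713612850428650727035572238262059702692, -23053765198895552950404723032134392057897620556316440675924045356284875517, 17767280894352719088410308333088672213621816196842915914746720404608839588, 44944683770231769857372390499878385216071451879786345884759060506458550798, -43664659512233197052267555982612579741706451302056262065770179835641965456, -24712064950850880294137816321767939355948700220975246913559255494861737486,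 19654310766162996431006945829713210918241871550883268613772807510094133220, 24542086480548298089538259594854420914627515849235555301102527897699473274, -10660327501825837532743125640229628155939787688683681720737188047950436360, -82889791724425535891210781185509590057478475412753902500682755013422593234, 62442353218473420583408222846466703971908572681135939017022582393266040222, 161163382477736549472422859385843744927849368341849941880910725384711630218, -149661264291323352149221887681714892190203167001004554216704238348318364522, -149390620558203683630806960794399437759796680320345160127763661407287592521, 148448582710663995167958277996698485973384180627218123638772072710910412548, 74562884172103053419123353449867324935227743332522107615251509197192347192, -75596897013610992182570335259672372139698605004497419673865720533544488812, -23298879044470821967742390533542492274083394082484983424772238750733002512, 19248130437794712506480622214606212175739634882717305054805977573139418428, 34083698094687723374918694656565986741389565109293801907632099841751994941, -29468138845375720900764025910897962973728839321684691506682100872019050432, -49119421421553514189648269116807644910599523506673719494199753421283764713, 51371945664681663160364840093139876790408914648034548816713788624095296496, 17421729071711557604631580745004657930003099196472726980272400588493027155, -26102756884320066104423448561707695682425720765397800263041023715297197478, 39958010373091746451933922533558139774407672289915182543380484738289079860, -30045785507419752931634226346490357730963759615779070878077232593745317974, -75841627496826681859322626467522865498867518467843848192169978645818757107, 69963800702785921429999051025015098885789152490783486390805714106883356788, 69445028339361762740601371412771682616203563722851374440030281760620272225, -66293300764811542680752900482880960892910707506872074783607644954534610422, -51435139846876900926715940061076223612880360804614352100215230167870454119, 49749517594950361347789795610724642129127458072733915762291329471570566320, 34615197344626043646602611898150954692025858406171757631508192633629410190, -34218112160030752350118364269904895712505250553592417311242941862046295908, -18626665350828158876676612801865223722848391338378583644760344476963053909,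 18798453664268237121866585112705677714019807134862012302127930312797720154, 7919072588822588286304189411542974711219563356817695154539092675786730060, -7959001530496418701257754797375424545379243143564653554235749778467555628, -3668113655032876717012975300385375175262580817917174454977551034757502496, 3823220134659760175126967158362366003547265791330988844128045819605500142, 823913691356991433255219200095495664005615116184651028343244680364209085, -977475672932793971556776008694723593723819115190338982461609950570215846, 566719903612252412060239295963262819661736034814251970431907866874765813, -540479031441994459646362841449910124655828159902757133406095506102937688, -414042606546550056822722465549332779607180865872461708316556751001366482, 447234129053976410098206584681233454856723497081488844525211904149792668]"

definition bezout_neg_sq_V :: ipoly where
  "bezout_neg_sq_V = [36980696839342995637789941557356535141890114595902122926443664824520005, -543058509123562366770064299912112052878972670258315241637426723799109348, 2266719246473745550018037165588431704728054933228513272854900825891197399, 3868934269431456534218681904913932510478080533546426010585281195002219490, 10005207054026824685354846284718825992088320933987912459396339661505585087, 18502954955358982099659065332975681623338280825583278164566428674123534556, 37371758788673754346176968503478390684599674762397198852376936381349035240, 49912829340735918654904903979189266165942975433699884362746543868756629952, 68894343456335925470522353217911893236363598084814047610853437138672198937, 68511993935904732767407706067840030969546468402859978121426410734684742338, 33237518320907365082831132868353225436536962333513531091035353532094358493, -16912425614945362843908063626221561107825109305200054641762185760703850332, -46784573908809623375514457982904840218523191153456267386594068819959443722, -28918672054361165031696415729931370522078610647583389701469882832248593798, -32631922690060942246722107671306036719459640000644740987492670278366230788, -75092940398170871664147483305159895073052857508548683977730479014304943728, -149520862233369385204007885207488015197248284115679105859938785491214359405, -144089050853338288501267390960705825655819510506138490559256449492956749406,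 -77728995110157160609545261106299782811862880941236502579594296522188036415, -25428963502489428733610008580771611225658014296023369613320750743159267046, -28253213060789396540682970011642841178143463004123351054832494106743565679, -43465456831090177670555543750108658228862235333917990732765987313164204390, -15473277111392029987717482188971714466970394787677239238099102598973607600, 35548259384130897658106327387256267746171202195828705499027786692695008224, 72190118314211369952208550022129932371188041200029862913504960368641158977, 67308865508499703316107255173484407643678543215037678562649413155117408084, 49751594499467556497924170407600433774095075715785627349303951278306558451, 33549411192357343912516195698434278385492044915796143839488949762142718056, 18624426993890671976498069988869781734744536872312316010461655277439669486, 7739410097058464288306870327909247408261006946022576504659211108210861712, 3611685540142145024644448360573290938397442133352657071848111321231232053, 921330115481118163193601187867342229013466394566191705513997103955877984, -480425651561402763373690703813134130106266128290515980733867057298218854, -447234129053976410098206584681233454856723497081488844525211904149792668]"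

definition bezout_neg_sq_N :: int where
  "bezout_neg_sq_N = 512238374900179282959829203304150210580736271225631415064052778747999628"

definition bezout_neg_U :: ipoly where
  "bezout_neg_U = [59311300334236936979240, -242777596908216503694653, 544866494150669944368546, -950190525966966802862004, 1500254085358361937627024, -2008464232772316011050231, 2317327262426528141664582, -2615660495860763747317207, 2912946835411258315769652, -2132065043820676912701798, -179261151806900459282438, 2672034777930211816079218, -3459140417410282264237216, 2870984191094781196524134, -3479729937923498466040724, 5855774786279664239763985, -7422120220979249020412910, 5630954855736121478499196, -2476563462092727244759150, 847823140304211199871295, -943078551243991541027084, 607774688986601907351964, 1139409160677325467869444, -2971739789037253750504442, 3529683613424371976673142, -2883486220819538961197108, 2016365470594230145924372, -1238861402337448872290997, 621302198668566116775482, -264270714333514845403021, 104399967550431398953524, -9669930424943864328134, -21265026675135917574314, 10632513337567958787157]"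

definition bezout_neg_V :: ipoly where
  "bezout_neg_V = [59311300334236936979240, 242777596908216503694653, 544866494150669944368546, 950190525966966802862004, 1500254085358361937627024, 2008464232772316011050231, 2317327262426528141664582, 2615660495860763747317207, 2912946835411258315769652, 2132065043820676912701798, -179261151806900459282438, -2672034777930211816079218, -3459140417410282264237216, -2870984191094781196524134, -3479729937923498466040724, -5855774786279664239763985, -7422120220979249020412910, -5630954855736121478499196, -2476563462092727244759150, -847823140304211199871295, -943078551243991541027084, -607774688986601907351964, 1139409160677325467869444, 2971739789037253750504442, 3529683613424371976673142, 2883486220819538961197108, 2016365470594230145924372, 1238861402337448872290997, 621302198668566116775482, 264270714333514845403021, 104399967550431398953524, 9669930424943864328134, -21265026675135917574314, -10632513337567958787157]"

definition bezout_neg_N :: int where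
  "bezout_neg_N = 118622600668473873958480"

lemma S_bezout_sq:
  "ipoly_eval bezout_sq_U x * ipoly_eval S_coeffs x
    + ipoly_eval bezout_sq_V x * ipoly_eval S_coeffs (x ^ 2) = of_int bezout_sq_N"
proof -
  have "list_all ((=) 0) (ipoly_add (ipoly_add (ipoly_mult bezout_sq_U S_coeffs)
    (ipoly_mult bezout_sq_V (ipoly_comp_sq S_coeffs))) [- bezout_sq_N])"
    by code_simp
  from ipoly_eval_zero[OF this, of x] show ?thesis
    by (simp add: ipoly_eval_add ipoly_eval_mult ipoly_eval_comp_sq)
qed

lemma S_bezout_neg_sq:
  "ipoly_eval bezout_neg_sq_U x * ipoly_eval S_coeffs x
    + ipoly_eval bezout_neg_sq_V x * ipoly_eval S_coeffs (- (x ^ 2)) = of_int bezout_neg_sq_N"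
proof -
  have "list_all ((=) 0) (ipoly_add (ipoly_add (ipoly_mult bezout_neg_sq_U S_coeffs)
    (ipoly_mult bezout_neg_sq_V (ipoly_comp_sq (ipoly_comp_neg S_coeffs)))) [- bezout_neg_sq_N])"
    by code_simp
  from ipoly_eval_zero[OF this, of x] show ?thesis
    by (simp add: ipoly_eval_add ipoly_eval_mult ipoly_eval_comp_sq ipoly_eval_comp_neg)
qed

lemma S_bezout_neg:
  "ipoly_eval bezout_neg_U x * ipoly_eval S_coeffs x
    + ipoly_eval bezout_neg_V x * ipoly_eval S_coeffs (- x) = of_int bezout_neg_N"
proof -
  have "list_all ((=) 0) (ipoly_add (ipoly_add (ipoly_mult bezout_neg_U S_coeffs)
    (ipoly_mult bezout_neg_V (ipoly_comp_neg S_coeffs))) [- bezout_neg_N])"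
    by code_simp
  from ipoly_eval_zero[OF this, of x] show ?thesis
    by (simp add: ipoly_eval_add ipoly_eval_mult ipoly_eval_comp_neg)
qed

lemma S_no_common_roots:
  assumes "ipoly_eval S_coeffs z = 0"
  shows "ipoly_eval S_coeffs (z ^ 2) \<noteq> 0" "ipoly_eval S_coeffs (- (z ^ 2)) \<noteq> 0"
    "ipoly_eval S_coeffs (- z) \<noteq> 0"
  using assms S_bezout_sq[of z] S_bezout_neg_sq[of z] S_bezout_neg[of z]
  by (auto simp: bezout_sq_N_def bezout_neg_sq_N_def bezout_neg_N_def)

theorem mainTheorem4:
  fixes t b :: nat
  assumes "b \<ge> 2"
  shows "\<not> cyclotomic_poly b dvd Q_poly t"
proof
  assume dvd: "cyclotomic_poly b dvd Q_poly t"
  from assms have b: "b > 0" by simp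
  have S_root: "ipoly_eval S_coeffs w = 0" if w: "w \<in> primitive_roots_of_unity b" for w
  proof (rule S_root_if_Q_poly_root)
    show "norm w = 1"
      using w b by (rule norm_primitive_root_of_unity)
    show "w \<noteq> 1"
      using primitive_root_of_unity_pow_eq_1_iff[OF w b, of 1] assms by auto
    show "poly (Q_poly t) w = 0"
      using dvd poly_cyclotomic_poly_primitive_root[OF w b] by (auto elim: dvdE)
  qed
  obtain z where z: "z \<in> primitive_roots_of_unity b"
    using primitive_root_of_unity_exists[OF b] by blast
  from primitive_root_of_unity_shift[OF z b] S_root[OF z] S_root S_no_common_roots
  show False by blast
qed

end
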